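(* Let $T>0$, $N=2$, $0<M<1$. Consider the problem of minimizing $\mathbb V(T)=\frac12(\xi_1(T)^2+\xi_2(T)^2)$ over $\alpha\in\mathcal U_M$, where $\dot\xi_i=-\xi_i+(1-\alpha_i)\bar\xi$ ($i=1,2$), $\bar\xi=\frac12(\xi_1+\xi_2)$, with initial datum satisfying $\bar\xi(0)>0$ and $\xi_1(0)>\xi_2(0)$. Let $\alpha\in\mathcal U_M$ be an optimal control whose trajectory $\xi$ satisfies $\xi_1(t)\ge\xi_2(t)$ for all $t\in[0,T]$. Define $$t_0=\frac{2}{2-M}\ln\Big(\frac{2-M}{2M}\,\frac{\xi_1(0)-\xi_2(0)}{\bar\xi(0)}+1\Big).$$ Then: (i) $T\ge t_0$ if and only if $\xi_1(T)=\xi_2(T)$; in this case $\alpha_1+\alpha_2\equiv M$ (so $\bar\xi(t)=\bar\xi(0)e^{-Mt/2}$). (ii) If $T<t_0$, then there exists $t^*\in[0,T)$ such that $\alpha(t)=(0,0)$ for all $t\in[0,t^* )$ and $\alpha(t)=(M,0)$ for all $t\in[t^*,T]$.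
   Context: $\mathcal U_M$ is the set of measurable $\alpha:[0,T]\to[0,1]^2$ with $\alpha_1(t)+\alpha_2(t)\le M$ for all $t$. *)

theory Defs
  imports "HOL-Analysis.Analysis"
begin

definition admissible :: "real \<Rightarrow> real \<Rightarrow> (real \<Rightarrow> real) \<Rightarrow> (real \<Rightarrow> real) \<Rightarrow> bool" where
  "admissible T M a1 a2 \<longleftrightarrow>
     a1 \<in> borel_measurable (lebesgue_on {0..T}) \<and> a2 \<in> borel_measurable (lebesgue_on {0..T}) \<and>
     (\<forall>t\<in>{0..T}. 0 \<le> a1 t \<and> a1 t \<le> 1 \<and> 0 \<le> a2 t \<and> a2 t \<le> 1 \<and> a1 t + a2 t \<le> M)"

definition is_traj :: "real \<Rightarrow> (real \<Rightarrow> real) \<Rightarrow> (real \<Rightarrow> real) \<Rightarrow> (real \<Rightarrow> real) \<Rightarrow> (real \<Rightarrow> real) \<Rightarrow> bool" where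
  "is_traj T a1 a2 x1 x2 \<longleftrightarrow>
     continuous_on {0..T} x1 \<and> continuous_on {0..T} x2 \<and>
     (\<forall>t\<in>{0..T}.
        ((\<lambda>s. - x1 s + (1 - a1 s) * ((x1 s + x2 s) / 2)) has_integral (x1 t - x1 0)) {0..t} \<and>
        ((\<lambda>s. - x2 s + (1 - a2 s) * ((x1 s + x2 s) / 2)) has_integral (x2 t - x2 0)) {0..t})"

definition cost :: "real \<Rightarrow> (real \<Rightarrow> real) \<Rightarrow> (real \<Rightarrow> real) \<Rightarrow> real" where
  "cost T x1 x2 = (x1 T ^ 2 + x2 T ^ 2) / 2"

definition optimal :: "real \<Rightarrow> real \<Rightarrow> (real \<Rightarrow> real) \<Rightarrow> (real \<Rightarrow> real) \<Rightarrow> (real \<Rightarrow> real) \<Rightarrow> (real \<Rightarrow> real) \<Rightarrow> bool" where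
  "optimal T M a1 a2 x1 x2 \<longleftrightarrow>
     admissible T M a1 a2 \<and> is_traj T a1 a2 x1 x2 \<and>
     (\<forall>b1 b2 y1 y2. admissible T M b1 b2 \<and> is_traj T b1 b2 y1 y2 \<and>
        y1 0 = x1 0 \<and> y2 0 = x2 0 \<longrightarrow> cost T x1 x2 \<le> cost T y1 y2)"

end

theory Submission
  imports Defs
begin

text \<open>Write \<open>m = (x1 + x2) / 2\<close> for the mean, \<open>g = x1 - x2\<close> for the gap and
  \<open>\<sigma> = a1 + a2\<close>.  Then \<open>m' = - \<sigma> m / 2\<close>, so \<open>m\<close> only depends on the total effort
  \<open>\<integral> \<sigma>\<close>, and \<open>(g e\<^sup>t)' = - e\<^sup>t (a1 - a2) m\<close>.  Among all controls with a given
  total effort, the control \<open>(0, 0)\<close> on \<open>[0, ts)\<close> followed by \<open>(M, 0)\<close> on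
  \<open>[ts, T]\<close> makes \<open>g(T)\<close> smallest: it uses \<open>a1 - a2 = \<sigma>\<close>, and by postponing the
  effort it keeps \<open>m\<close> as large as possible.  So \<open>g(T)\<close> is at least the final gap of this
  bang-bang control, with equality only for the bang-bang control itself.

  The cost \<open>V(T) = m(T)\<^sup>2 + g(T)\<^sup>2 / 4\<close> is then compared with switching controls
  \<open>(M (1 + \<lambda>) / 2, M (1 - \<lambda>) / 2)\<close> after \<open>ts\<close>, whose final mean and gap are
  explicit.  If the bang-bang control switching at \<open>ts = 0\<close> drives the gap to a value
  \<open>\<le> 0\<close> (which is equivalent to \<open>T \<ge> t0\<close>), some \<open>\<lambda>\<close> reaches \<open>g(T) = 0\<close> with full
  effort, and optimality forces \<open>g(T) = 0\<close> and full effort.  Otherwise the final gap of the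
  bang-bang controls stays positive at the optimal effort (switching earlier where it vanishes
  would be cheaper), and optimality forces the bang-bang control.\<close>

section \<open>Integrals of bounded measurable functions\<close>

lemma integrable_on_Icc_if_bounded_measurable:
  fixes f :: "real \<Rightarrow> real"
  assumes "f \<in> borel_measurable (lebesgue_on {a..b})" "\<And>x. x \<in> {a..b} \<Longrightarrow> \<bar>f x\<bar> \<le> B"
  shows "f integrable_on {a..b}"
  using measurable_bounded_by_integrable_imp_integrable_real[of f "{a..b}" "\<lambda>_. B"] assms
  by auto

lemma integral_increment_le:
  fixes f :: "real \<Rightarrow> real"
  assumes f: "f integrable_on {0..T}" and st: "s \<in> {0..T}" "t \<in> {0..T}"
    and bound: "\<And>r. min s t \<le> r \<Longrightarrow> r \<le> max s t \<Longrightarrow> \<bar>f r\<bar> \<le> B"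
  shows "\<bar>integral {0..s} f - integral {0..t} f\<bar> \<le> B * \<bar>s - t\<bar>"
proof -
  have ordered: "\<bar>integral {0..v} f - integral {0..u} f\<bar> \<le> B * (v - u)"
    if uv: "0 \<le> u" "u \<le> v" "v \<le> T" and b: "\<And>r. u \<le> r \<Longrightarrow> r \<le> v \<Longrightarrow> \<bar>f r\<bar> \<le> B" for u v
  proof -
    have "f integrable_on {0..v}" and int_uv: "f integrable_on {u..v}"
      using f uv by (auto intro: integrable_on_subinterval)
    then have "integral {0..u} f + integral {u..v} f = integral {0..v} f"
      using Henstock_Kurzweil_Integration.integral_combine[OF uv(1,2)] by blast
    moreover have "norm (integral {u..v} f) \<le> B * (v - u)"
      using has_integral_bound[of B f _ u v] integrable_integral[OF int_uv] b b[of v] uv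
        order_trans[OF abs_ge_zero b[of v]]
      by (auto simp: cbox_interval content_real)
    ultimately show ?thesis by auto
  qed
  show ?thesis
  proof (cases "t \<le> s")
    case True
    then show ?thesis using ordered[of t s] st bound by auto
  next
    case False
    then show ?thesis using ordered[of s t] st bound by (auto simp: abs_minus_commute)
  qed
qed

lemma integral_lincomb_Icc:
  fixes f g :: "real \<Rightarrow> real"
  assumes "f integrable_on {0..T}" "g integrable_on {0..T}" "x \<in> {0..T}"
  shows "integral {0..x} (\<lambda>u. a * f u + b * g u) = a * integral {0..x} f + b * integral {0..x} g"
proof -
  have "f integrable_on {0..x}" "g integrable_on {0..x}"
    using assms integrable_on_subinterval[of _ "{0..T}" 0 x] by auto
  then show ?thesis
    by (subst Henstock_Kurzweil_Integration.integral_add) (auto intro: integrable_on_mult_right)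
qed

lemma integral_increment_le_square:
  fixes f :: "real \<Rightarrow> real"
  assumes m: "f \<in> borel_measurable (lebesgue_on {0..T})"
    and sr: "s \<in> {0..T}" "r \<in> {0..T}" and c: "c \<in> {s, r}" and C: "0 \<le> C"
    and bound: "\<And>u. u \<in> {0..T} \<Longrightarrow> \<bar>f u\<bar> \<le> C * \<bar>u - c\<bar>"
  shows "\<bar>integral {0..s} f - integral {0..r} f\<bar> \<le> C * (s - r)^2"
proof -
  have "f integrable_on {0..T}"
  proof (rule integrable_on_Icc_if_bounded_measurable[OF m])
    fix u assume u: "u \<in> {0..T}"
    then have "\<bar>u - c\<bar> \<le> T" using sr c by auto
    then show "\<bar>f u\<bar> \<le> C * T" using bound[OF u] C by (meson mult_left_mono order_trans)
  qed
  then have "\<bar>integral {0..s} f - integral {0..r} f\<bar> \<le> (C * \<bar>s - r\<bar>) * \<bar>s - r\<bar>"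
  proof (rule integral_increment_le[OF _ sr])
    fix u assume "min s r \<le> u" "u \<le> max s r"
    then have "u \<in> {0..T}" "\<bar>u - c\<bar> \<le> \<bar>s - r\<bar>"
      using sr c by (auto simp: min_def max_def split: if_splits)
    then show "\<bar>f u\<bar> \<le> C * \<bar>s - r\<bar>" using bound C by (meson mult_left_mono order_trans)
  qed
  then show ?thesis by (simp add: power2_eq_square mult.assoc)
qed

lemma AE_eq_0_if_nonneg_integral_eq_0:
  fixes f :: "real \<Rightarrow> real"
  assumes m: "f \<in> borel_measurable (lebesgue_on {a..b})"
    and bounded: "\<And>x. x \<in> {a..b} \<Longrightarrow> \<bar>f x\<bar> \<le> B"
    and nonneg: "\<And>x. x \<in> {a..b} \<Longrightarrow> 0 \<le> f x"
    and zero: "integral {a..b} f = 0"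
  shows "AE x in lebesgue_on {a..b}. f x = 0"
proof -
  have "f absolutely_integrable_on {a..b}"
    by (rule measurable_bounded_by_integrable_imp_absolutely_integrable[OF m, of "\<lambda>_. B"])
      (use bounded in auto)
  then have int: "integrable (lebesgue_on {a..b}) f"
    by (simp add: integrable_restrict_space set_integrable_def)
  have "integral\<^sup>L (lebesgue_on {a..b}) f = 0"
    using lebesgue_integral_eq_integral[OF int] zero by simp
  moreover have "AE x in lebesgue_on {a..b}. 0 \<le> f x"
    using nonneg by (intro AE_I2) auto
  ultimately show ?thesis using integral_nonneg_eq_0_iff_AE[OF int] by simp
qed

lemma AE_lebesgue_if_AE_lebesgue_on:
  fixes u v :: real
  assumes "AE t in lebesgue_on {u..v}. P t"
  shows "AE t in lebesgue. t \<in> {u..v} \<longrightarrow> P t"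
proof -
  have "{u..v} \<in> sets lebesgue" using fmeasurableD[OF lmeasurable_cbox[of u v]] by (simp add: cbox_interval)
  then show ?thesis using assms by (subst (asm) AE_restrict_space_iff) auto
qed

section \<open>Linear scalar equations with bounded measurable coefficients\<close>

lemma constant_if_increments_quadratic:
  fixes E :: "real \<Rightarrow> real"
  assumes d: "0 < d"
    and quadratic: "\<And>s t. s \<in> {0..T} \<Longrightarrow> t \<in> {0..T} \<Longrightarrow> \<bar>s - t\<bar> < d \<Longrightarrow> \<bar>E s - E t\<bar> \<le> C * (s - t)^2"
    and t: "t \<in> {0..T}"
  shows "E t = E 0"
proof -
  have "(E has_field_derivative 0) (at x within {0..T})" if x: "x \<in> {0..T}" for x
  proof -
    have "\<forall>\<^sub>F y in at x within {0..T}. norm ((E y - E x) / (y - x)) \<le> \<bar>C\<bar> * \<bar>y - x\<bar>"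
      unfolding eventually_at
    proof (intro exI[of _ d] conjI ballI impI d)
      fix y assume y: "y \<in> {0..T}" "y \<noteq> x \<and> dist y x < d"
      then have "\<bar>E y - E x\<bar> \<le> C * (y - x)^2"
        using quadratic[of y x] x by (simp add: dist_real_def)
      also have "\<dots> \<le> \<bar>C\<bar> * \<bar>y - x\<bar> * \<bar>y - x\<bar>"
        by (simp add: power2_eq_square abs_mult_self_eq mult.assoc mult_right_mono)
      finally have "\<bar>E y - E x\<bar> \<le> \<bar>C\<bar> * \<bar>y - x\<bar> * \<bar>y - x\<bar>" .
      moreover have "0 < \<bar>y - x\<bar>" using y by simp
      ultimately show "norm ((E y - E x) / (y - x)) \<le> \<bar>C\<bar> * \<bar>y - x\<bar>"
        by (simp add: abs_divide divide_le_eq)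
    qed
    moreover have "((\<lambda>y. \<bar>C\<bar> * \<bar>y - x\<bar>) \<longlongrightarrow> 0) (at x within {0..T})"
      by (auto intro!: tendsto_eq_intros)
    ultimately have "((\<lambda>y. (E y - E x) / (y - x)) \<longlongrightarrow> 0) (at x within {0..T})"
      by (rule Lim_null_comparison)
    then show ?thesis by (simp add: has_field_derivative_iff)
  qed
  then obtain c where "\<forall>x\<in>{0..T}. E x = c"
    using has_field_derivative_zero_constant[of "{0..T}" E] by auto
  then show ?thesis using t by auto
qed

lemma abs_exp_minus_one_minus_le_square:
  fixes x :: real
  assumes "\<bar>x\<bar> \<le> 1"
  shows "\<bar>exp x - 1 - x\<bar> \<le> x^2"
proof (cases "0 \<le> x")
  case True
  have "1 + x \<le> exp x" "exp x \<le> 1 + x + x^2" "0 \<le> x^2"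
    using exp_ge_add_one_self[of x] exp_bound[of x] True assms by auto
  then show ?thesis unfolding abs_le_iff by linarith
next
  case False
  have "exp x * (1 - x) \<le> exp x * exp (- x)"
    using exp_ge_add_one_self[of "- x"] by (intro mult_left_mono) auto
  then have "exp x \<le> 1 / (1 - x)" using False by (simp add: exp_minus field_simps)
  also have "\<dots> \<le> 1 + x + x^2"
  proof -
    have "x * x^2 \<le> 0" using False by (simp add: mult_nonpos_nonneg)
    then have "1 \<le> (1 + x + x^2) * (1 - x)" by (simp add: algebra_simps power2_eq_square)
    then show ?thesis using False by (simp add: divide_le_eq)
  qed
  finally show ?thesis
    using exp_ge_add_one_self[of x] zero_le_power2[of x] unfolding abs_le_iff by linarith
qed

lemma abs_exp_diff_le:
  fixes a b :: real
  shows "\<bar>exp a - exp b\<bar> \<le> exp (max a b) * \<bar>a - b\<bar>"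
proof -
  have *: "exp v - exp u \<le> exp v * (v - u)" if "u \<le> v" for u v :: real
    using mult_left_mono[OF exp_ge_add_one_self[of "u - v"], of "exp v"]
    by (simp add: exp_diff algebra_simps)
  show ?thesis
    using *[of b a] *[of a b] by (cases "b \<le> a") (auto simp: max_def)
qed

locale scalar_linear_ode =
  fixes T K :: real and p q y :: "real \<Rightarrow> real"
  assumes T_nonneg: "0 \<le> T"
    and continuous_y: "continuous_on {0..T} y"
    and measurable_p: "p \<in> borel_measurable (lebesgue_on {0..T})"
    and measurable_q: "q \<in> borel_measurable (lebesgue_on {0..T})"
    and bounded_p: "\<And>t. t \<in> {0..T} \<Longrightarrow> \<bar>p t\<bar> \<le> K"
    and bounded_q: "\<And>t. t \<in> {0..T} \<Longrightarrow> \<bar>q t\<bar> \<le> K"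
    and solution: "\<And>t. t \<in> {0..T} \<Longrightarrow> ((\<lambda>s. p s * y s + q s) has_integral (y t - y 0)) {0..t}"
begin

abbreviation P :: "real \<Rightarrow> real" where
  "P t \<equiv> integral {0..t} p"

abbreviation E :: "real \<Rightarrow> real" where
  "E t \<equiv> y t * exp (- P t) - integral {0..t} (\<lambda>s. exp (- P s) * q s)"

lemma K_nonneg: "0 \<le> K"
  using bounded_p[of 0] T_nonneg by force

lemma integrable_p: "p integrable_on {0..T}"
  using integrable_on_Icc_if_bounded_measurable[OF measurable_p bounded_p] .

lemma integrable_q: "q integrable_on {0..T}"
  using integrable_on_Icc_if_bounded_measurable[OF measurable_q bounded_q] .

lemma measurable_y: "y \<in> borel_measurable (lebesgue_on {0..T})"
  by (rule continuous_imp_measurable_on_sets_lebesgue[OF continuous_y]) auto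

lemma P_lipschitz:
  assumes "s \<in> {0..T}" "r \<in> {0..T}"
  shows "\<bar>P s - P r\<bar> \<le> K * \<bar>s - r\<bar>"
proof (rule integral_increment_le[OF integrable_p assms])
  fix u assume "min s r \<le> u" "u \<le> max s r"
  then show "\<bar>p u\<bar> \<le> K" using assms by (intro bounded_p) auto
qed

lemma exp_minus_P_le:
  assumes "s \<in> {0..T}"
  shows "exp (- P s) \<le> exp (K * T)"
proof -
  have "\<bar>P s - P 0\<bar> \<le> K * \<bar>s - 0\<bar>" using P_lipschitz[OF assms, of 0] T_nonneg by auto
  also have "\<dots> \<le> K * T" using assms K_nonneg by (auto intro: mult_left_mono)
  finally show ?thesis by simp
qed

lemma exp_minus_P_lipschitz:
  assumes "s \<in> {0..T}" "r \<in> {0..T}"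
  shows "\<bar>exp (- P s) - exp (- P r)\<bar> \<le> exp (K * T) * K * \<bar>s - r\<bar>"
proof -
  have "\<bar>exp (- P s) - exp (- P r)\<bar> \<le> exp (max (- P s) (- P r)) * \<bar>- P s - - P r\<bar>"
    by (rule abs_exp_diff_le)
  also have "\<dots> \<le> exp (K * T) * (K * \<bar>s - r\<bar>)"
    using exp_minus_P_le[OF assms(1)] exp_minus_P_le[OF assms(2)] P_lipschitz[OF assms]
    by (intro mult_mono) (auto simp: max_def)
  finally show ?thesis by (simp add: mult.assoc)
qed

lemma y_bounded:
  obtains Y where "0 \<le> Y" "\<And>t. t \<in> {0..T} \<Longrightarrow> \<bar>y t\<bar> \<le> Y"
proof -
  obtain Y where "\<forall>t\<in>{0..T}. \<bar>y t\<bar> \<le> Y"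
    using continuous_on_compact_bound[OF compact_Icc continuous_y] by (metis real_norm_def)
  moreover have "0 \<in> {0..T}" using T_nonneg by simp
  ultimately show ?thesis using that by (meson abs_ge_zero order_trans)
qed

lemma y_lipschitz:
  obtains L where "0 \<le> L" "\<And>s r. s \<in> {0..T} \<Longrightarrow> r \<in> {0..T} \<Longrightarrow> \<bar>y s - y r\<bar> \<le> L * \<bar>s - r\<bar>"
proof -
  obtain Y where Y: "0 \<le> Y" "\<And>t. t \<in> {0..T} \<Longrightarrow> \<bar>y t\<bar> \<le> Y" using y_bounded by metis
  define g where "g s = p s * y s + q s" for s
  have g_bounded: "\<bar>g s\<bar> \<le> K * Y + K" if "s \<in> {0..T}" for s
  proof -
    have "\<bar>g s\<bar> \<le> \<bar>p s\<bar> * \<bar>y s\<bar> + \<bar>q s\<bar>" unfolding g_def by (metis abs_mult abs_triangle_ineq)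
    also have "\<dots> \<le> K * Y + K"
      using bounded_p[OF that] bounded_q[OF that] Y(2)[OF that] K_nonneg by (intro add_mono mult_mono) auto
    finally show ?thesis .
  qed
  have "g \<in> borel_measurable (lebesgue_on {0..T})"
    unfolding g_def using measurable_p measurable_q measurable_y by measurable
  then have g: "g integrable_on {0..T}" using integrable_on_Icc_if_bounded_measurable g_bounded by blast
  have "\<bar>y s - y r\<bar> \<le> (K * Y + K) * \<bar>s - r\<bar>" if sr: "s \<in> {0..T}" "r \<in> {0..T}" for s r
  proof -
    have "y s - y r = integral {0..s} g - integral {0..r} g"
      using solution[OF sr(1), THEN integral_unique] solution[OF sr(2), THEN integral_unique]
      unfolding g_def by simp
    also have "\<bar>\<dots>\<bar> \<le> (K * Y + K) * \<bar>s - r\<bar>"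
      using sr by (intro integral_increment_le[OF g sr] g_bounded) auto
    finally show ?thesis .
  qed
  moreover have "0 \<le> K * Y + K" using Y(1) K_nonneg by simp
  ultimately show ?thesis using that by blast
qed

lemma measurable_exp_minus_P: "(\<lambda>s. exp (- P s)) \<in> borel_measurable (lebesgue_on {0..T})"
proof -
  have "continuous_on {0..T} (\<lambda>s. exp (- P s))"
    by (intro continuous_intros indefinite_integral_continuous_1[OF integrable_p])
  then show ?thesis by (rule continuous_imp_measurable_on_sets_lebesgue) auto
qed

lemma integrable_exp_minus_P_q: "(\<lambda>s. exp (- P s) * q s) integrable_on {0..T}"
proof (rule integrable_on_Icc_if_bounded_measurable)
  show "(\<lambda>s. exp (- P s) * q s) \<in> borel_measurable (lebesgue_on {0..T})"
    using measurable_exp_minus_P measurable_q by measurable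
  show "\<bar>exp (- P s) * q s\<bar> \<le> exp (K * T) * K" if "s \<in> {0..T}" for s
    unfolding abs_mult using exp_minus_P_le[OF that] bounded_q[OF that] by (intro mult_mono) auto
qed

lemma integrable_p_y: "(\<lambda>s. p s * y s) integrable_on {0..T}"
proof -
  obtain Y where "0 \<le> Y" "\<And>t. t \<in> {0..T} \<Longrightarrow> \<bar>y t\<bar> \<le> Y" using y_bounded by metis
  moreover have "(\<lambda>s. p s * y s) \<in> borel_measurable (lebesgue_on {0..T})"
    using measurable_p measurable_y by measurable
  ultimately show ?thesis
    using bounded_p K_nonneg
    by (intro integrable_on_Icc_if_bounded_measurable[of _ _ _ "K * Y"]) (auto simp: abs_mult intro: mult_mono)
qed

text \<open>The product rule for \<open>y \<cdot> exp (- P)\<close>, written without derivatives: each of the three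
  terms below is of second order in \<open>s - r\<close>.\<close>
lemma E_increment_eq:
  assumes s: "s \<in> {0..T}" and r: "r \<in> {0..T}"
  shows "E s - E r =
      (integral {0..s} (\<lambda>u. exp (- P s) * p u * (y u - y r))
        - integral {0..r} (\<lambda>u. exp (- P s) * p u * (y u - y r)))
    + y r * (exp (- P s) * (P s - P r) + exp (- P s) - exp (- P r))
    + (integral {0..s} (\<lambda>u. (exp (- P s) - exp (- P u)) * q u)
        - integral {0..r} (\<lambda>u. (exp (- P s) - exp (- P u)) * q u))"
proof -
  define A where "A = exp (- P s)"
  have y: "y x = y 0 + integral {0..x} (\<lambda>u. p u * y u) + integral {0..x} q" if "x \<in> {0..T}" for x
    using solution[OF that, THEN integral_unique] integral_lincomb_Icc[OF integrable_p_y integrable_q that, of 1 1]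
    by simp
  have f1: "integral {0..x} (\<lambda>u. A * p u * (y u - y r))
      = A * integral {0..x} (\<lambda>u. p u * y u) + (- (A * y r)) * integral {0..x} p" if "x \<in> {0..T}" for x
    using integral_lincomb_Icc[OF integrable_p_y integrable_p that, of A "- (A * y r)"]
    by (simp add: algebra_simps)
  have f3: "integral {0..x} (\<lambda>u. (A - exp (- P u)) * q u)
      = A * integral {0..x} q + (-1) * integral {0..x} (\<lambda>u. exp (- P u) * q u)" if "x \<in> {0..T}" for x
    using integral_lincomb_Icc[OF integrable_q integrable_exp_minus_P_q that, of A "-1"]
    by (simp add: algebra_simps)
  have ys: "y s = y r + (integral {0..s} (\<lambda>u. p u * y u) - integral {0..r} (\<lambda>u. p u * y u))
      + (integral {0..s} q - integral {0..r} q)"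
    using y[OF s] y[OF r] by simp
  show ?thesis
    unfolding A_def[symmetric] f1[OF s] f1[OF r] f3[OF s] f3[OF r] ys
    by (simp add: algebra_simps)
qed

lemma exp_minus_P_second_order:
  assumes s: "s \<in> {0..T}" and r: "r \<in> {0..T}" and sr: "\<bar>s - r\<bar> < 1 / (K + 1)"
  shows "\<bar>exp (- P s) * (P s - P r) + exp (- P s) - exp (- P r)\<bar> \<le> exp (K * T) * (K * \<bar>s - r\<bar>)^2"
proof -
  define x where "x = P s - P r"
  have x: "\<bar>x\<bar> \<le> K * \<bar>s - r\<bar>" unfolding x_def using P_lipschitz[OF s r] .
  moreover have "K * \<bar>s - r\<bar> \<le> 1"
  proof -
    have "\<bar>s - r\<bar> * (K + 1) < 1" using sr K_nonneg by (simp add: field_simps)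
    moreover have "K * \<bar>s - r\<bar> \<le> \<bar>s - r\<bar> * (K + 1)" by (simp add: algebra_simps)
    ultimately show ?thesis by linarith
  qed
  ultimately have "\<bar>exp x - 1 - x\<bar> \<le> (K * \<bar>s - r\<bar>)^2"
    using abs_exp_minus_one_minus_le_square[of x] power_mono[OF x abs_ge_zero, of 2] by simp
  moreover have "exp (- P s) * (P s - P r) + exp (- P s) - exp (- P r) = - exp (- P s) * (exp x - 1 - x)"
    unfolding x_def by (simp add: algebra_simps flip: exp_add)
  ultimately show ?thesis
    using exp_minus_P_le[OF s] by (simp add: abs_mult mult_mono)
qed

lemma E_increment_quadratic:
  obtains C where "\<And>s r. s \<in> {0..T} \<Longrightarrow> r \<in> {0..T} \<Longrightarrow> \<bar>s - r\<bar> < 1 / (K + 1) \<Longrightarrow>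
    \<bar>E s - E r\<bar> \<le> C * (s - r)^2"
proof -
  obtain Y where Y: "0 \<le> Y" "\<And>t. t \<in> {0..T} \<Longrightarrow> \<bar>y t\<bar> \<le> Y"
    using y_bounded by metis
  obtain L where L: "0 \<le> L" "\<And>s r. s \<in> {0..T} \<Longrightarrow> r \<in> {0..T} \<Longrightarrow> \<bar>y s - y r\<bar> \<le> L * \<bar>s - r\<bar>"
    using y_lipschitz by metis
  define B where "B = exp (K * T)"
  have B: "0 < B" "\<And>t. t \<in> {0..T} \<Longrightarrow> exp (- P t) \<le> B"
    unfolding B_def using exp_minus_P_le by auto
  have "\<bar>E s - E r\<bar> \<le> (B * K * L + Y * B * K^2 + B * K * K) * (s - r)^2"
    if s: "s \<in> {0..T}" and r: "r \<in> {0..T}" and sr: "\<bar>s - r\<bar> < 1 / (K + 1)" for s r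
  proof -
    have "\<bar>integral {0..s} (\<lambda>u. exp (- P s) * p u * (y u - y r))
        - integral {0..r} (\<lambda>u. exp (- P s) * p u * (y u - y r))\<bar> \<le> B * K * L * (s - r)^2"
    proof (rule integral_increment_le_square[OF _ s r])
      show "(\<lambda>u. exp (- P s) * p u * (y u - y r)) \<in> borel_measurable (lebesgue_on {0..T})"
        using measurable_p measurable_y by measurable
      show "\<bar>exp (- P s) * p u * (y u - y r)\<bar> \<le> B * K * L * \<bar>u - r\<bar>" if "u \<in> {0..T}" for u
        unfolding abs_mult mult.assoc using B(1) B(2)[OF s] bounded_p[OF that] L(2)[OF that r] K_nonneg
        by (intro mult_mono) auto
    qed (use B L K_nonneg in auto)
    moreover have "\<bar>integral {0..s} (\<lambda>u. (exp (- P s) - exp (- P u)) * q u)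
        - integral {0..r} (\<lambda>u. (exp (- P s) - exp (- P u)) * q u)\<bar> \<le> B * K * K * (s - r)^2"
    proof (rule integral_increment_le_square[OF _ s r])
      show "(\<lambda>u. (exp (- P s) - exp (- P u)) * q u) \<in> borel_measurable (lebesgue_on {0..T})"
        using measurable_q measurable_exp_minus_P by measurable
      show "\<bar>(exp (- P s) - exp (- P u)) * q u\<bar> \<le> B * K * K * \<bar>u - s\<bar>" if "u \<in> {0..T}" for u
        using exp_minus_P_lipschitz[OF s that] bounded_q[OF that] K_nonneg
        unfolding abs_mult by (simp add: B_def abs_minus_commute mult_mono mult.commute mult.left_commute)
    qed (use B K_nonneg in auto)
    moreover have "\<bar>y r * (exp (- P s) * (P s - P r) + exp (- P s) - exp (- P r))\<bar> \<le> Y * (B * (K * \<bar>s - r\<bar>)^2)"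
      unfolding abs_mult B_def using Y(1) Y(2)[OF r] exp_minus_P_second_order[OF s r sr]
      by (intro mult_mono) auto
    ultimately have "\<bar>E s - E r\<bar> \<le> B * K * L * (s - r)^2 + Y * (B * (K * \<bar>s - r\<bar>)^2) + B * K * K * (s - r)^2"
      using E_increment_eq[OF s r] by linarith
    also have "\<dots> = (B * K * L + Y * B * K^2 + B * K * K) * (s - r)^2"
      by (simp add: power2_eq_square algebra_simps)
    finally show ?thesis .
  qed
  then show ?thesis using that by blast
qed

theorem variation_of_constants:
  assumes t: "t \<in> {0..T}"
  shows "y t * exp (- P t) = y 0 + integral {0..t} (\<lambda>s. exp (- P s) * q s)"
proof -
  obtain C where "\<And>s r. s \<in> {0..T} \<Longrightarrow> r \<in> {0..T} \<Longrightarrow> \<bar>s - r\<bar> < 1 / (K + 1) \<Longrightarrow>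
      \<bar>E s - E r\<bar> \<le> C * (s - r)^2"
    using E_increment_quadratic by blast
  then have "E t = E 0"
    using K_nonneg t by (intro constant_if_increments_quadratic[of "1 / (K + 1)" T E C]) (auto simp del: divide_const_simps)
  then show ?thesis by simp
qed

end

section \<open>Switching controls\<close>

definition switch_control :: "real \<Rightarrow> real \<Rightarrow> real \<Rightarrow> real" where
  "switch_control ts u t = (if t < ts then 0 else u)"

text \<open>Mean and gap of the trajectory starting at \<open>(b0 + d0 / 2, b0 - d0 / 2)\<close> under the
  controls \<open>switch_control ts (M (1 + \<lambda>) / 2)\<close> and \<open>switch_control ts (M (1 - \<lambda>) / 2)\<close>,
  with \<open>c = \<lambda> b0\<close> (see \<open>switch_trajectory\<close>); \<open>\<lambda> = 1\<close> is the bang-bang control.\<close>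
definition switch_mean :: "real \<Rightarrow> real \<Rightarrow> real \<Rightarrow> real \<Rightarrow> real" where
  "switch_mean M ts b0 t = b0 * exp (- M * max 0 (t - ts) / 2)"

definition switch_gap :: "real \<Rightarrow> real \<Rightarrow> real \<Rightarrow> real \<Rightarrow> real \<Rightarrow> real" where
  "switch_gap M ts c d0 t =
     exp (- t) * (d0 - 2 * M / (2 - M) * c * (exp (t - M * max 0 (t - ts) / 2) - exp (min t ts)))"

lemma switch_control_measurable: "switch_control ts u \<in> borel_measurable (lebesgue_on S)"
proof -
  have "switch_control ts u \<in> borel_measurable lborel" unfolding switch_control_def by simp
  then show ?thesis by (intro measurable_restrict_space1 measurable_completion)
qed

lemma switch_mean_deriv:
  assumes "t \<noteq> ts"
  shows "(switch_mean M ts b0 has_real_derivative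
      - switch_control ts M t * switch_mean M ts b0 t / 2) (at t)"
proof (cases "t < ts")
  case True
  have "(switch_mean M ts b0 has_real_derivative 0) (at t)"
    by (rule has_field_derivative_transform_within_open[of "\<lambda>_. b0" _ _ "{..<ts}"])
      (use True in \<open>auto simp: switch_mean_def\<close>)
  then show ?thesis using True by (simp add: switch_control_def)
next
  case False
  then have t: "ts < t" using assms by simp
  have "((\<lambda>s. b0 * exp (- M * (s - ts) / 2)) has_real_derivative
      - M * (b0 * exp (- M * (t - ts) / 2)) / 2) (at t)"
    by (auto intro!: derivative_eq_intros simp: field_simps)
  then have "(switch_mean M ts b0 has_real_derivative - M * (b0 * exp (- M * (t - ts) / 2)) / 2) (at t)"
    by (rule has_field_derivative_transform_within_open[of _ _ _ "{ts<..}"])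
      (use t in \<open>auto simp: switch_mean_def\<close>)
  then show ?thesis using t by (simp add: switch_control_def switch_mean_def)
qed

lemma switch_gap_deriv:
  assumes "t \<noteq> ts" and "M \<noteq> 2"
  shows "(switch_gap M ts c d0 has_real_derivative
      - switch_gap M ts c d0 t - switch_control ts M t * switch_mean M ts c t) (at t)"
proof (cases "t < ts")
  case True
  have "((\<lambda>s. exp (- s) * d0) has_real_derivative - (exp (- t) * d0)) (at t)"
    by (auto intro!: derivative_eq_intros)
  then have "(switch_gap M ts c d0 has_real_derivative - (exp (- t) * d0)) (at t)"
    by (rule has_field_derivative_transform_within_open[of _ _ _ "{..<ts}"])
      (use True in \<open>auto simp: switch_gap_def\<close>)
  then show ?thesis using True by (simp add: switch_control_def switch_gap_def)
next
  case False
  then have t: "ts < t" using assms by simp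
  define k where "k = 2 * M / (2 - M)"
  define g where "g s = exp (- s) * d0 + k * c * exp (ts - s) - k * c * exp (- M * (s - ts) / 2)" for s
  have dg: "(g has_real_derivative
      - exp (- t) * d0 - k * c * exp (ts - t) + k * c * (M / 2) * exp (- M * (t - ts) / 2)) (at t)"
    unfolding g_def by (rule derivative_eq_intros refl | simp)+
  have gap_eq: "switch_gap M ts c d0 s = g s" if "ts < s" for s
  proof -
    have "exp (- s) * exp (s - M * (s - ts) / 2) = exp (- M * (s - ts) / 2)"
      "exp (- s) * exp ts = exp (ts - s)"
      by (simp_all add: mult_exp_exp)
    then show ?thesis
      using that unfolding switch_gap_def g_def k_def[symmetric] by (simp add: algebra_simps)
  qed
  have "(switch_gap M ts c d0 has_real_derivative
      - exp (- t) * d0 - k * c * exp (ts - t) + k * c * (M / 2) * exp (- M * (t - ts) / 2)) (at t)"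
    by (rule has_field_derivative_transform_within_open[OF dg, of "{ts<..}"]) (use t gap_eq in auto)
  moreover have "- exp (- t) * d0 - k * c * exp (ts - t) + k * c * (M / 2) * exp (- M * (t - ts) / 2)
      = - g t - M * (c * exp (- M * (t - ts) / 2))"
  proof -
    have k: "k * (M / 2) = k - M" unfolding k_def using assms(2) by (simp add: field_simps)
    have kE: "k * c * (M / 2) * e = k * c * e - M * c * e" for e
    proof -
      have "k * c * (M / 2) * e = (k * (M / 2)) * (c * e)" by (simp add: algebra_simps)
      also have "\<dots> = k * c * e - M * c * e" unfolding k by (simp add: algebra_simps)
      finally show ?thesis .
    qed
    show ?thesis unfolding g_def kE by (simp add: algebra_simps)
  qed
  ultimately show ?thesis
    using t gap_eq[OF t] by (simp add: switch_control_def switch_mean_def)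
qed

lemma continuous_switch_mean: "continuous_on S (switch_mean M ts b0)"
  unfolding switch_mean_def by (auto intro!: continuous_intros)

lemma continuous_switch_gap: "continuous_on S (switch_gap M ts c d0)"
proof -
  define C where "C = 2 * M / (2 - M) * c"
  have "switch_gap M ts c d0 = (\<lambda>t. exp (- t) * (d0 - C * (exp (t - M * max 0 (t - ts) / 2) - exp (min t ts))))"
    by (simp add: fun_eq_iff switch_gap_def C_def)
  then show ?thesis by (auto intro!: continuous_intros)
qed

lemma switch_mean_scale: "switch_mean M ts (lam * b0) t = lam * switch_mean M ts b0 t"
  by (simp add: switch_mean_def)

lemma switch_admissible:
  assumes "0 < M" "M < 1" "0 \<le> lam" "lam \<le> 1"
  shows "admissible T M (switch_control ts (M * (1 + lam) / 2)) (switch_control ts (M * (1 - lam) / 2))"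
  unfolding admissible_def
proof (intro conjI ballI switch_control_measurable)
  fix t
  define \<mu> where "\<mu> = M * lam"
  have \<mu>: "\<mu> \<le> M" "0 \<le> \<mu>" and eq: "M * (1 + lam) / 2 = (M + \<mu>) / 2" "M * (1 - lam) / 2 = (M - \<mu>) / 2"
    using assms mult_left_mono[of lam 1 M] by (auto simp: \<mu>_def algebra_simps)
  show "0 \<le> switch_control ts (M * (1 + lam) / 2) t" "switch_control ts (M * (1 + lam) / 2) t \<le> 1"
    "0 \<le> switch_control ts (M * (1 - lam) / 2) t" "switch_control ts (M * (1 - lam) / 2) t \<le> 1"
    "switch_control ts (M * (1 + lam) / 2) t + switch_control ts (M * (1 - lam) / 2) t \<le> M"
    unfolding eq switch_control_def using assms \<mu> by (auto simp: add_divide_distrib[symmetric])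
qed

lemma is_traj_if_has_derivative:
  assumes S: "finite S" and cont: "continuous_on {0..T} y1" "continuous_on {0..T} y2"
    and d1: "\<And>x. x \<notin> S \<Longrightarrow> (y1 has_real_derivative - y1 x + (1 - a1 x) * ((y1 x + y2 x) / 2)) (at x)"
    and d2: "\<And>x. x \<notin> S \<Longrightarrow> (y2 has_real_derivative - y2 x + (1 - a2 x) * ((y1 x + y2 x) / 2)) (at x)"
  shows "is_traj T a1 a2 y1 y2"
  unfolding is_traj_def
proof (intro conjI ballI cont)
  fix t assume t: "t \<in> {0..T}"
  show "((\<lambda>s. - y1 s + (1 - a1 s) * ((y1 s + y2 s) / 2)) has_integral (y1 t - y1 0)) {0..t}"
    using S d1 t continuous_on_subset[OF cont(1), of "{0..t}"]
    by (intro fundamental_theorem_of_calculus_interior_strong[of S])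
      (auto simp: has_real_derivative_iff_has_vector_derivative[symmetric])
  show "((\<lambda>s. - y2 s + (1 - a2 s) * ((y1 s + y2 s) / 2)) has_integral (y2 t - y2 0)) {0..t}"
    using S d2 t continuous_on_subset[OF cont(2), of "{0..t}"]
    by (intro fundamental_theorem_of_calculus_interior_strong[of S])
      (auto simp: has_real_derivative_iff_has_vector_derivative[symmetric])
qed

lemma switch_trajectory:
  fixes T M ts b0 d0 lam :: real
  assumes "0 < M" "M < 1" "0 \<le> ts"
  defines "y1 \<equiv> \<lambda>t. switch_mean M ts b0 t + switch_gap M ts (lam * b0) d0 t / 2"
    and "y2 \<equiv> \<lambda>t. switch_mean M ts b0 t - switch_gap M ts (lam * b0) d0 t / 2"
  shows "is_traj T (switch_control ts (M * (1 + lam) / 2)) (switch_control ts (M * (1 - lam) / 2)) y1 y2"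
    and "y1 0 = b0 + d0 / 2" and "y2 0 = b0 - d0 / 2"
proof -
  let ?m = "switch_mean M ts b0" and ?g = "switch_gap M ts (lam * b0) d0"
  show "is_traj T (switch_control ts (M * (1 + lam) / 2)) (switch_control ts (M * (1 - lam) / 2)) y1 y2"
  proof (rule is_traj_if_has_derivative[of "{ts}"])
    show "continuous_on {0..T} y1" "continuous_on {0..T} y2"
      unfolding y1_def y2_def by (auto intro!: continuous_intros continuous_switch_mean continuous_switch_gap)
    fix x assume "x \<notin> {ts}"
    let ?\<sigma> = "switch_control ts M x"
    have "M \<noteq> 2" using assms by simp
    have dm: "(?m has_real_derivative - ?\<sigma> * ?m x / 2) (at x)"
      using switch_mean_deriv \<open>x \<notin> {ts}\<close> by simp
    have dg: "(?g has_real_derivative - ?g x - ?\<sigma> * (lam * ?m x)) (at x)"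
      using switch_gap_deriv[OF _ \<open>M \<noteq> 2\<close>, of x ts "lam * b0" d0] \<open>x \<notin> {ts}\<close>
      by (simp add: switch_mean_scale)
    have "(y1 has_real_derivative - ?\<sigma> * ?m x / 2 + (- ?g x - ?\<sigma> * (lam * ?m x)) / 2) (at x)"
      "(y2 has_real_derivative - ?\<sigma> * ?m x / 2 - (- ?g x - ?\<sigma> * (lam * ?m x)) / 2) (at x)"
      unfolding y1_def y2_def by (intro DERIV_add DERIV_diff DERIV_cdivide dm dg)+
    moreover have "- ?\<sigma> * ?m x / 2 + (- ?g x - ?\<sigma> * (lam * ?m x)) / 2
        = - y1 x + (1 - switch_control ts (M * (1 + lam) / 2) x) * ((y1 x + y2 x) / 2)"
      "- ?\<sigma> * ?m x / 2 - (- ?g x - ?\<sigma> * (lam * ?m x)) / 2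
        = - y2 x + (1 - switch_control ts (M * (1 - lam) / 2) x) * ((y1 x + y2 x) / 2)"
      by (simp_all add: y1_def y2_def switch_control_def field_simps)
    ultimately show "(y1 has_real_derivative - y1 x + (1 - switch_control ts (M * (1 + lam) / 2) x) * ((y1 x + y2 x) / 2)) (at x)"
      "(y2 has_real_derivative - y2 x + (1 - switch_control ts (M * (1 - lam) / 2) x) * ((y1 x + y2 x) / 2)) (at x)"
      by simp_all
  qed simp
  show "y1 0 = b0 + d0 / 2" "y2 0 = b0 - d0 / 2"
    using assms(3) by (auto simp: y1_def y2_def switch_mean_def switch_gap_def)
qed

lemma exp_switch_mean_has_integral:
  assumes ts: "0 \<le> ts" "ts \<le> T" and M: "M \<noteq> 2"
  shows "((\<lambda>s. exp s * switch_mean M ts b0 s) has_integral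
    b0 * (exp ts - 1) + b0 * (exp (T - M * (T - ts) / 2) - exp ts) / (1 - M / 2)) {0..T}"
proof (rule has_integral_combine[OF ts])
  have "((\<lambda>s. b0 * exp s) has_integral (b0 * exp ts - b0 * exp 0)) {0..ts}"
    using ts by (intro fundamental_theorem_of_calculus)
      (auto simp: has_real_derivative_iff_has_vector_derivative[symmetric] intro!: derivative_eq_intros)
  then have "((\<lambda>s. b0 * exp s) has_integral b0 * (exp ts - 1)) {0..ts}"
    by (simp add: algebra_simps)
  then show "((\<lambda>s. exp s * switch_mean M ts b0 s) has_integral b0 * (exp ts - 1)) {0..ts}"
    by (rule has_integral_eq[rotated]) (auto simp: switch_mean_def)
  define G where "G s = b0 * exp (M * ts / 2 + (1 - M / 2) * s) / (1 - M / 2)" for s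
  have "(G has_real_derivative exp s * switch_mean M ts b0 s) (at s)" if "ts \<le> s" for s
  proof -
    have "M * ts / 2 + (1 - M / 2) * s = s + - M * (s - ts) / 2" by (simp add: field_simps)
    then have "exp (M * ts / 2 + (1 - M / 2) * s) = exp s * exp (- M * (s - ts) / 2)"
      by (metis exp_add)
    then show ?thesis
      unfolding G_def using that M by (auto intro!: derivative_eq_intros simp: switch_mean_def)
  qed
  then have "((\<lambda>s. exp s * switch_mean M ts b0 s) has_integral (G T - G ts)) {ts..T}"
    using ts by (intro fundamental_theorem_of_calculus)
      (auto simp: has_real_derivative_iff_has_vector_derivative[symmetric] intro: has_field_derivative_at_within)
  moreover have "G T - G ts = b0 * (exp (T - M * (T - ts) / 2) - exp ts) / (1 - M / 2)"
    unfolding G_def by (simp add: algebra_simps diff_divide_distrib)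
  ultimately show "((\<lambda>s. exp s * switch_mean M ts b0 s) has_integral
      b0 * (exp (T - M * (T - ts) / 2) - exp ts) / (1 - M / 2)) {ts..T}"
    by simp
qed

lemma switch_gap_eq:
  assumes ts: "0 \<le> ts" "ts \<le> T" and M: "M \<noteq> 2"
  shows "switch_gap M ts b0 d0 T * exp T
    = d0 - 2 * (b0 + integral {0..T} (\<lambda>s. exp s * switch_mean M ts b0 s) - switch_mean M ts b0 T * exp T)"
proof -
  define X where "X = exp (T - M * (T - ts) / 2)"
  have "switch_mean M ts b0 T * exp T = b0 * X"
    using ts by (simp add: switch_mean_def X_def mult.assoc flip: exp_add)
  moreover have "switch_gap M ts b0 d0 T * exp T = d0 - 2 * M / (2 - M) * b0 * (X - exp ts)"
    using ts by (simp add: switch_gap_def X_def exp_minus field_simps)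
  moreover have "2 * (b0 + (b0 * (exp ts - 1) + b0 * (X - exp ts) / (1 - M / 2)) - b0 * X)
      = 2 * M / (2 - M) * b0 * (X - exp ts)"
    using M by (simp add: field_simps)
  ultimately show ?thesis
    using integral_unique[OF exp_switch_mean_has_integral[OF ts M, of b0]] unfolding X_def by simp
qed

lemma switch_final_eqs:
  assumes "0 \<le> ts" "ts \<le> T"
  shows "switch_mean M ts b0 T = b0 * exp (- M * (T - ts) / 2)"
    and "switch_gap M ts c d0 T = exp (- T) * (d0 - 2 * M / (2 - M) * c * (exp (T - M * (T - ts) / 2) - exp ts))"
  using assms by (simp_all add: switch_mean_def switch_gap_def)

lemma switch_mean_final_mono:
  assumes "0 \<le> b0" "0 \<le> M" "ts \<le> ts'"
  shows "switch_mean M ts b0 T \<le> switch_mean M ts' b0 T"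
  using assms by (auto simp: switch_mean_def intro!: mult_left_mono mult_left_mono[of _ _ M] max.mono)

lemma switch_mean_final_eq_iff:
  assumes "0 < b0" "0 < M" "0 \<le> ts" "ts \<le> T" "0 \<le> ts'" "ts' \<le> T"
  shows "switch_mean M ts b0 T = switch_mean M ts' b0 T \<longleftrightarrow> ts = ts'"
  using assms by (auto simp: switch_final_eqs)

lemma switch_gap_final_at_T: "0 \<le> T \<Longrightarrow> switch_gap M T c d0 T = exp (- T) * d0"
  by (simp add: switch_gap_def)

lemma switch_gap_final_at_0_nonpos_iff:
  assumes M: "0 < M" "M < 1" and b0: "0 < b0" and d0: "0 < d0" and T: "0 \<le> T"
  shows "switch_gap M 0 b0 d0 T \<le> 0 \<longleftrightarrow> 2 / (2 - M) * ln ((2 - M) / (2 * M) * (d0 / b0) + 1) \<le> T"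
proof -
  define k where "k = 2 * M / (2 - M)"
  define A where "A = (2 - M) / (2 * M) * (d0 / b0) + 1"
  define y where "y = (2 - M) / 2 * T"
  have k: "0 < k" unfolding k_def using M by simp
  have A: "A = d0 / (b0 * k) + 1" unfolding A_def k_def using M b0 by (simp add: field_simps)
  have "0 < d0 / (b0 * k)" using d0 b0 k by simp
  then have A_pos: "0 < A" unfolding A by linarith
  have "switch_gap M 0 b0 d0 T \<le> 0 \<longleftrightarrow> d0 \<le> b0 * k * (exp y - 1)"
  proof -
    have "T - M * (T - 0) / 2 = y" unfolding y_def by (simp add: field_simps)
    then have "switch_gap M 0 b0 d0 T = exp (- T) * (d0 - b0 * k * (exp y - 1))"
      unfolding switch_final_eqs(2)[OF order_refl T] k_def by (simp add: algebra_simps)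
    then show ?thesis by (simp add: mult_le_0_iff)
  qed
  also have "\<dots> \<longleftrightarrow> d0 / (b0 * k) \<le> exp y - 1" using b0 k by (simp add: pos_divide_le_eq mult.commute)
  also have "\<dots> \<longleftrightarrow> A \<le> exp y" unfolding A by linarith
  also have "\<dots> \<longleftrightarrow> ln A \<le> y" using A_pos by (metis exp_gt_zero ln_exp ln_le_cancel_iff)
  also have "\<dots> \<longleftrightarrow> 2 / (2 - M) * ln A \<le> T" unfolding y_def using M by (simp add: field_simps)
  finally show ?thesis unfolding A_def .
qed

text \<open>At a switching time where the final gap vanishes, the cost of the switching controls
  has derivative \<open>M B\<^sup>2 > 0\<close> in the switching time, so switching slightly earlier is cheaper.\<close>
lemma switch_cost_decreases_before_gap_zero:
  assumes b0: "0 < b0" and M: "0 < M" "M < 1" and ts1: "0 < ts1" "ts1 \<le> T"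
    and zero: "switch_gap M ts1 b0 d0 T = 0"
  shows "\<exists>ts\<in>{0..<ts1}. (switch_mean M ts b0 T)^2 + (switch_gap M ts b0 d0 T)^2 / 4
    < (switch_mean M ts1 b0 T)^2"
proof -
  define k where "k = 2 * M / (2 - M)"
  define B where "B ts = b0 * exp (- M * (T - ts) / 2)" for ts
  define L where "L ts = exp (- T) * (d0 - k * b0 * (exp (T - M * (T - ts) / 2) - exp ts))" for ts
  define L' where "L' ts = exp (- T) * (- (k * b0) * (exp (T - M * (T - ts) / 2) * (M / 2) - exp ts))" for ts
  define f where "f ts = (B ts)^2 + (L ts)^2 / 4" for ts
  have switch: "switch_mean M ts b0 T = B ts" "switch_gap M ts b0 d0 T = L ts" if "0 \<le> ts" "ts \<le> T" for ts
    using switch_final_eqs[OF that] unfolding B_def L_def k_def by simp_all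
  have "(B has_real_derivative B x * (M / 2)) (at x)" for x
    unfolding B_def by (auto intro!: derivative_eq_intros simp: field_simps)
  moreover have "(L has_real_derivative L' x) (at x)" for x
    unfolding L_def L'_def by (auto intro!: derivative_eq_intros simp: field_simps)
  ultimately have "(f has_real_derivative 2 * B ts1 * (B ts1 * (M / 2)) + 2 * L ts1 * L' ts1 / 4) (at ts1)"
    unfolding f_def by (auto intro!: derivative_eq_intros)
  moreover have L0: "L ts1 = 0" using zero switch ts1 by simp
  moreover have "0 < 2 * B ts1 * (B ts1 * (M / 2))" unfolding B_def using b0 M by simp
  ultimately obtain d where "0 < d" and d: "\<And>h. 0 < h \<Longrightarrow> h < d \<Longrightarrow> f (ts1 - h) < f ts1"
    using DERIV_pos_inc_left by force
  define h where "h = min (d / 2) ts1"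
  have h: "0 < h" "h < d" "h \<le> ts1" unfolding h_def using \<open>0 < d\<close> ts1 by auto
  then have "f (ts1 - h) < (B ts1)^2" using d L0 unfolding f_def by fastforce
  then show ?thesis
    using h ts1 switch[of "ts1 - h"] switch[of ts1] unfolding f_def by (intro bexI[of _ "ts1 - h"]) auto
qed

lemma continuous_switch_gap_final:
  "continuous_on {0..T} (\<lambda>ts. switch_gap M ts c d0 T)"
proof -
  define C where "C = 2 * M / (2 - M) * c"
  have "continuous_on {0..T} (\<lambda>ts. exp (- T) * (d0 - C * (exp (T - M * (T - ts) / 2) - exp ts)))"
    by (auto intro!: continuous_intros)
  then show ?thesis
    by (rule continuous_on_cong[THEN iffD1, rotated 2]) (auto simp: switch_final_eqs C_def)
qed

lemma continuous_switch_gap_scale: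
  "continuous_on S (\<lambda>lam. switch_gap M ts (lam * b0) d0 T)"
proof -
  have "continuous_on S (\<lambda>lam. exp (- T) * (d0 - 2 * M / (2 - M) * (lam * b0)
      * (exp (T - M * max 0 (T - ts) / 2) - exp (min T ts))))"
    by (intro continuous_intros)
  then show ?thesis by (simp add: switch_gap_def)
qed

lemma cost_eq_mean_gap: "cost T y1 y2 = ((y1 T + y2 T) / 2)^2 + (y1 T - y2 T)^2 / 4"
  by (simp add: cost_def power2_eq_square field_simps)

section \<open>Admissible trajectories\<close>

locale controlled_trajectory =
  fixes T M :: real and a1 a2 x1 x2 :: "real \<Rightarrow> real"
  assumes T_pos: "0 < T" and M_pos: "0 < M" and M_less_1: "M < 1"
    and admissible: "admissible T M a1 a2"
    and trajectory: "is_traj T a1 a2 x1 x2"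
    and mean_0_pos: "0 < (x1 0 + x2 0) / 2"
begin

abbreviation mean :: "real \<Rightarrow> real" where
  "mean t \<equiv> (x1 t + x2 t) / 2"

abbreviation gap :: "real \<Rightarrow> real" where
  "gap t \<equiv> x1 t - x2 t"

abbreviation effort :: "real \<Rightarrow> real" where
  "effort t \<equiv> integral {0..t} (\<lambda>s. a1 s + a2 s)"

lemma control_bounds:
  assumes "s \<in> {0..T}"
  shows "0 \<le> a1 s" "a1 s \<le> 1" "0 \<le> a2 s" "a2 s \<le> 1" "a1 s + a2 s \<le> M"
  using admissible assms unfolding admissible_def by auto

lemma measurable_controls:
  "a1 \<in> borel_measurable (lebesgue_on {0..T})" "a2 \<in> borel_measurable (lebesgue_on {0..T})"
  using admissible unfolding admissible_def by auto

lemma integrable_total_control: "(\<lambda>s. a1 s + a2 s) integrable_on {0..T}"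
proof (rule integrable_on_Icc_if_bounded_measurable)
  show "(\<lambda>s. a1 s + a2 s) \<in> borel_measurable (lebesgue_on {0..T})"
    using measurable_controls by measurable
  show "\<bar>a1 s + a2 s\<bar> \<le> 2" if "s \<in> {0..T}" for s
    using control_bounds[OF that] by auto
qed

lemma effort_increment:
  assumes "0 \<le> s" "s \<le> t" "t \<le> T"
  shows "effort t - effort s = integral {s..t} (\<lambda>s. a1 s + a2 s)"
    and "0 \<le> effort t - effort s" and "effort t - effort s \<le> M * (t - s)"
proof -
  have int_0t: "(\<lambda>s. a1 s + a2 s) integrable_on {0..t}" and int: "(\<lambda>s. a1 s + a2 s) integrable_on {s..t}"
    using integrable_total_control assms by (auto intro: integrable_on_subinterval)
  then show eq: "effort t - effort s = integral {s..t} (\<lambda>s. a1 s + a2 s)"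
    using Henstock_Kurzweil_Integration.integral_combine[OF assms(1,2) int_0t] by simp
  show "0 \<le> effort t - effort s"
    unfolding eq using assms control_bounds by (intro integral_nonneg[OF int]) force
  have "integral {s..t} (\<lambda>s. a1 s + a2 s) \<le> integral {s..t} (\<lambda>_. M)"
    using assms control_bounds by (intro integral_le[OF int]) force+
  then show "effort t - effort s \<le> M * (t - s)" unfolding eq using assms by (simp add: mult.commute)
qed

lemma effort_bounds:
  assumes "t \<in> {0..T}"
  shows "0 \<le> effort t" "effort t \<le> M * t"
  using effort_increment(2,3)[of 0 t] assms by auto

lemma continuous_mean: "continuous_on {0..T} mean"
  using trajectory unfolding is_traj_def by (auto intro!: continuous_intros)

lemma continuous_gap: "continuous_on {0..T} gap"
  using trajectory unfolding is_traj_def by (auto intro!: continuous_intros)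

lemma measurable_mean: "mean \<in> borel_measurable (lebesgue_on {0..T})"
  by (rule continuous_imp_measurable_on_sets_lebesgue[OF continuous_mean]) auto

lemma mean_bounded:
  obtains B where "\<And>t. t \<in> {0..T} \<Longrightarrow> \<bar>mean t\<bar> \<le> B"
  using continuous_on_compact_bound[OF compact_Icc continuous_mean] by (metis real_norm_def)

text \<open>The equations for the mean and the gap, in the form \<open>p y + q\<close> of
  \<open>scalar_linear_ode\<close>.\<close>
lemma mean_gap_integral_equations:
  assumes t: "t \<in> {0..T}"
  shows "((\<lambda>s. - (a1 s + a2 s) / 2 * mean s + 0) has_integral (mean t - mean 0)) {0..t}"
    and "((\<lambda>s. - 1 * mean s + mean s * (1 - (a1 s + a2 s) / 2)) has_integral (mean t - mean 0)) {0..t}"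
    and "((\<lambda>s. - 1 * gap s + - (a1 s - a2 s) * mean s) has_integral (gap t - gap 0)) {0..t}"
proof -
  have h1: "((\<lambda>s. - x1 s + (1 - a1 s) * mean s) has_integral (x1 t - x1 0)) {0..t}"
    and h2: "((\<lambda>s. - x2 s + (1 - a2 s) * mean s) has_integral (x2 t - x2 0)) {0..t}"
    using trajectory t unfolding is_traj_def by auto
  have "((\<lambda>s. ((- x1 s + (1 - a1 s) * mean s) + (- x2 s + (1 - a2 s) * mean s)) / 2)
      has_integral ((x1 t - x1 0) + (x2 t - x2 0)) / 2) {0..t}"
    using has_integral_add[OF h1 h2] by (rule has_integral_divide)
  moreover have "(\<lambda>s. ((- x1 s + (1 - a1 s) * mean s) + (- x2 s + (1 - a2 s) * mean s)) / 2)
      = (\<lambda>s. - (a1 s + a2 s) / 2 * mean s + 0)"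
    by (simp add: fun_eq_iff field_simps)
  moreover have "((x1 t - x1 0) + (x2 t - x2 0)) / 2 = mean t - mean 0"
    by (simp add: field_simps)
  ultimately show mean: "((\<lambda>s. - (a1 s + a2 s) / 2 * mean s + 0) has_integral (mean t - mean 0)) {0..t}"
    by metis
  moreover have "(\<lambda>s. - (a1 s + a2 s) / 2 * mean s + 0) = (\<lambda>s. - 1 * mean s + mean s * (1 - (a1 s + a2 s) / 2))"
    by (simp add: fun_eq_iff field_simps)
  ultimately show "((\<lambda>s. - 1 * mean s + mean s * (1 - (a1 s + a2 s) / 2)) has_integral (mean t - mean 0)) {0..t}"
    by simp
  have "(\<lambda>s. (- x1 s + (1 - a1 s) * mean s) - (- x2 s + (1 - a2 s) * mean s))
      = (\<lambda>s. - 1 * gap s + - (a1 s - a2 s) * mean s)"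
    by (simp add: fun_eq_iff field_simps)
  then show "((\<lambda>s. - 1 * gap s + - (a1 s - a2 s) * mean s) has_integral (gap t - gap 0)) {0..t}"
    using has_integral_diff[OF h1 h2] by (simp add: algebra_simps)
qed

lemma mean_eq:
  assumes t: "t \<in> {0..T}"
  shows "mean t = mean 0 * exp (- effort t / 2)"
proof -
  interpret scalar_linear_ode T 1 "\<lambda>s. - (a1 s + a2 s) / 2" "\<lambda>_. 0" mean
  proof
    show "(\<lambda>s. - (a1 s + a2 s) / 2) \<in> borel_measurable (lebesgue_on {0..T})"
      using measurable_controls by measurable
    show "\<bar>- (a1 s + a2 s) / 2\<bar> \<le> 1" if "s \<in> {0..T}" for s
      using control_bounds[OF that] by auto
  qed (use T_pos continuous_mean mean_gap_integral_equations(1) in auto)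
  have "(\<lambda>s. a1 s + a2 s) integrable_on {0..t}"
    using integrable_total_control t by (auto intro: integrable_on_subinterval)
  then have "- 1 / 2 * effort t = integral {0..t} (\<lambda>s. - 1 / 2 * (a1 s + a2 s))"
    by (rule integral_mult)
  also have "\<dots> = integral {0..t} (\<lambda>s. - (a1 s + a2 s) / 2)"
    by (rule integral_cong) (simp add: field_simps)
  finally have "integral {0..t} (\<lambda>s. - (a1 s + a2 s) / 2) = - effort t / 2" by simp
  then show ?thesis using variation_of_constants[OF t] by (simp add: exp_minus field_simps)
qed

lemma gap_exp_eq:
  assumes t: "t \<in> {0..T}"
  shows "gap t * exp t = gap 0 - integral {0..t} (\<lambda>s. exp s * ((a1 s - a2 s) * mean s))"
proof -
  obtain B where B: "\<And>t. t \<in> {0..T} \<Longrightarrow> \<bar>mean t\<bar> \<le> B" using mean_bounded by metis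
  interpret scalar_linear_ode T "1 + B" "\<lambda>_. - 1" "\<lambda>s. - (a1 s - a2 s) * mean s" gap
  proof
    show "(\<lambda>s. - (a1 s - a2 s) * mean s) \<in> borel_measurable (lebesgue_on {0..T})"
      using measurable_controls measurable_mean by measurable
    show "\<bar>- (a1 s - a2 s) * mean s\<bar> \<le> 1 + B" "\<bar>- 1 :: real\<bar> \<le> 1 + B" if "s \<in> {0..T}" for s
    proof -
      have "\<bar>- (a1 s - a2 s)\<bar> \<le> 1" using control_bounds[OF that] by auto
      then have "\<bar>- (a1 s - a2 s) * mean s\<bar> \<le> 1 * B"
        unfolding abs_mult using B[OF that] by (intro mult_mono) auto
      then show "\<bar>- (a1 s - a2 s) * mean s\<bar> \<le> 1 + B" "\<bar>- 1 :: real\<bar> \<le> 1 + B"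
        using B[OF that] by auto
    qed
  qed (use T_pos continuous_gap mean_gap_integral_equations(3) in auto)
  have "integral {0..t} (\<lambda>s. exp (- integral {0..s} (\<lambda>_. - 1)) * (- (a1 s - a2 s) * mean s))
      = integral {0..t} (\<lambda>s. - (exp s * ((a1 s - a2 s) * mean s)))"
    by (rule integral_cong) (use t in \<open>auto simp: field_simps\<close>)
  then show ?thesis using variation_of_constants[OF t] t by simp
qed

lemma mean_exp_eq:
  assumes t: "t \<in> {0..T}"
  shows "mean t * exp t = mean 0 + integral {0..t} (\<lambda>s. exp s * (mean s * (1 - (a1 s + a2 s) / 2)))"
proof -
  obtain B where B: "\<And>t. t \<in> {0..T} \<Longrightarrow> \<bar>mean t\<bar> \<le> B" using mean_bounded by metis
  interpret scalar_linear_ode T "1 + B" "\<lambda>_. - 1" "\<lambda>s. mean s * (1 - (a1 s + a2 s) / 2)" mean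
  proof
    show "(\<lambda>s. mean s * (1 - (a1 s + a2 s) / 2)) \<in> borel_measurable (lebesgue_on {0..T})"
      using measurable_controls measurable_mean by measurable
    show "\<bar>mean s * (1 - (a1 s + a2 s) / 2)\<bar> \<le> 1 + B" "\<bar>- 1 :: real\<bar> \<le> 1 + B" if "s \<in> {0..T}" for s
    proof -
      have "\<bar>1 - (a1 s + a2 s) / 2\<bar> \<le> 1" using control_bounds[OF that] by auto
      then have "\<bar>mean s * (1 - (a1 s + a2 s) / 2)\<bar> \<le> B * 1"
        unfolding abs_mult using B[OF that] by (intro mult_mono) auto
      then show "\<bar>mean s * (1 - (a1 s + a2 s) / 2)\<bar> \<le> 1 + B" "\<bar>- 1 :: real\<bar> \<le> 1 + B"
        using B[OF that] by auto
    qed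
  qed (use T_pos continuous_mean mean_gap_integral_equations(2) in auto)
  have "integral {0..t} (\<lambda>s. exp (- integral {0..s} (\<lambda>_. - 1)) * (mean s * (1 - (a1 s + a2 s) / 2)))
      = integral {0..t} (\<lambda>s. exp s * (mean s * (1 - (a1 s + a2 s) / 2)))"
    by (rule integral_cong) (use t in auto)
  then show ?thesis using variation_of_constants[OF t] t by simp
qed

text \<open>The bang-bang control switching at \<open>switch_time\<close> has the same total effort.\<close>
abbreviation switch_time :: real where
  "switch_time \<equiv> T - effort T / M"

lemma switch_time_bounds: "0 \<le> switch_time" "switch_time \<le> T"
  using effort_bounds[of T] T_pos M_pos by (auto simp: field_simps)

lemma mean_pos:
  assumes "t \<in> {0..T}"
  shows "0 < mean t"
  using mean_eq[OF assms] mean_0_pos by (metis exp_gt_zero mult_pos_pos)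

lemma mean_le_switch_mean:
  assumes t: "t \<in> {0..T}"
  shows "mean t \<le> switch_mean M switch_time (mean 0) t"
proof -
  have "effort T - effort t \<le> M * (T - t)" using effort_increment(3)[of t T] t by auto
  then have "M * max 0 (t - switch_time) \<le> effort t"
    using effort_bounds[OF t] by (simp add: max_def algebra_simps)
  then show ?thesis
    using mean_eq[OF t] mean_0_pos by (simp add: switch_mean_def)
qed

lemma final_mean_eq: "mean T = switch_mean M switch_time (mean 0) T"
proof -
  have "- M * max 0 (T - switch_time) / 2 = - effort T / 2"
    using switch_time_bounds M_pos by (simp add: max_def)
  then show ?thesis unfolding switch_mean_def using mean_eq[of T] T_pos by simp
qed

lemma integrable_exp_controls_mean:
  "(\<lambda>s. exp s * ((u * a1 s + v * a2 s) * mean s)) integrable_on {0..T}"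
proof -
  obtain B where B: "\<And>t. t \<in> {0..T} \<Longrightarrow> \<bar>mean t\<bar> \<le> B" using mean_bounded by metis
  have "continuous_on {0..T} exp" by (intro continuous_intros)
  then have "exp \<in> borel_measurable (lebesgue_on {0..T})"
    by (rule continuous_imp_measurable_on_sets_lebesgue) auto
  then have "(\<lambda>s. exp s * ((u * a1 s + v * a2 s) * mean s)) \<in> borel_measurable (lebesgue_on {0..T})"
    using measurable_controls measurable_mean by measurable
  moreover have "\<bar>exp s * ((u * a1 s + v * a2 s) * mean s)\<bar> \<le> exp T * ((\<bar>u\<bar> + \<bar>v\<bar>) * B)"
    if "s \<in> {0..T}" for s
  proof -
    have "\<bar>u * a1 s\<bar> \<le> \<bar>u\<bar>" "\<bar>v * a2 s\<bar> \<le> \<bar>v\<bar>"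
      using control_bounds[OF that] by (auto simp: abs_mult intro: mult_left_le)
    then have "\<bar>u * a1 s + v * a2 s\<bar> \<le> \<bar>u\<bar> + \<bar>v\<bar>"
      using abs_triangle_ineq[of "u * a1 s" "v * a2 s"] by linarith
    then show ?thesis
      unfolding abs_mult[of "exp s"] abs_mult[of "u * a1 s + v * a2 s"]
      using that B[OF that] by (intro mult_mono) auto
  qed
  ultimately show ?thesis by (rule integrable_on_Icc_if_bounded_measurable)
qed

lemma weighted_effort_eq:
  "integral {0..T} (\<lambda>s. exp s * ((a1 s + a2 s) * mean s))
    = 2 * (mean 0 + integral {0..T} (\<lambda>s. exp s * mean s) - mean T * exp T)"
proof -
  have int1: "(\<lambda>s. exp s * ((a1 s + a2 s) * mean s)) integrable_on {0..T}"
    using integrable_exp_controls_mean[of 1 1] by simp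
  have int2: "(\<lambda>s. exp s * mean s) integrable_on {0..T}"
    by (intro integrable_continuous_interval continuous_intros continuous_mean)
  have "integral {0..T} (\<lambda>s. exp s * (mean s * (1 - (a1 s + a2 s) / 2)))
      = integral {0..T} (\<lambda>s. 1 * (exp s * mean s) + (- 1 / 2) * (exp s * ((a1 s + a2 s) * mean s)))"
    by (rule integral_cong) (simp add: field_simps)
  also have "\<dots> = 1 * integral {0..T} (\<lambda>s. exp s * mean s)
      + (- 1 / 2) * integral {0..T} (\<lambda>s. exp s * ((a1 s + a2 s) * mean s))"
    by (rule integral_lincomb_Icc[OF int2 int1]) (use T_pos in auto)
  finally have "integral {0..T} (\<lambda>s. exp s * (mean s * (1 - (a1 s + a2 s) / 2)))
      = 1 * integral {0..T} (\<lambda>s. exp s * mean s)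
      + (- 1 / 2) * integral {0..T} (\<lambda>s. exp s * ((a1 s + a2 s) * mean s))" .
  moreover have "mean T * exp T
      = mean 0 + integral {0..T} (\<lambda>s. exp s * (mean s * (1 - (a1 s + a2 s) / 2)))"
    by (rule mean_exp_eq) (use T_pos in auto)
  ultimately show ?thesis by argo
qed

lemma exp_mean_deficit:
  defines "\<beta> \<equiv> switch_mean M switch_time (mean 0)"
  shows "0 \<le> integral {0..T} (\<lambda>s. exp s * \<beta> s) - integral {0..T} (\<lambda>s. exp s * mean s)"
    and "integral {0..T} (\<lambda>s. exp s * \<beta> s) = integral {0..T} (\<lambda>s. exp s * mean s)
      \<Longrightarrow> t \<in> {0..T} \<Longrightarrow> mean t = \<beta> t"
proof -
  have cont: "continuous_on {0..T} (\<lambda>s. exp s * \<beta> s - exp s * mean s)"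
    unfolding \<beta>_def by (intro continuous_intros continuous_mean continuous_switch_mean)
  have nonneg: "0 \<le> exp s * \<beta> s - exp s * mean s" if "s \<in> {0..T}" for s
    using mean_le_switch_mean[OF that] unfolding \<beta>_def by simp
  have "integral {0..T} (\<lambda>s. exp s * \<beta> s - exp s * mean s)
      = integral {0..T} (\<lambda>s. exp s * \<beta> s) - integral {0..T} (\<lambda>s. exp s * mean s)"
    unfolding \<beta>_def
    by (intro Henstock_Kurzweil_Integration.integral_diff integrable_continuous_interval
        continuous_intros continuous_mean continuous_switch_mean)
  moreover have "0 \<le> integral {0..T} (\<lambda>s. exp s * \<beta> s - exp s * mean s)"
    using nonneg by (intro integral_nonneg integrable_continuous_interval cont) auto
  ultimately show "0 \<le> integral {0..T} (\<lambda>s. exp s * \<beta> s) - integral {0..T} (\<lambda>s. exp s * mean s)"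
    by simp
  assume "integral {0..T} (\<lambda>s. exp s * \<beta> s) = integral {0..T} (\<lambda>s. exp s * mean s)" "t \<in> {0..T}"
  then show "mean t = \<beta> t"
    using \<open>integral {0..T} _ = _ - _\<close> integral_eq_0_iff[OF cont T_pos nonneg] by auto
qed

lemma weighted_a2_integral:
  shows "0 \<le> integral {0..T} (\<lambda>s. exp s * (2 * a2 s * mean s))"
    and "integral {0..T} (\<lambda>s. exp s * (2 * a2 s * mean s)) = 0 \<Longrightarrow> AE t in lebesgue_on {0..T}. a2 t = 0"
proof -
  have m: "(\<lambda>s. exp s * (2 * a2 s * mean s)) \<in> borel_measurable (lebesgue_on {0..T})"
  proof -
    have "continuous_on {0..T} exp" by (intro continuous_intros)
    then have "exp \<in> borel_measurable (lebesgue_on {0..T})"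
      by (rule continuous_imp_measurable_on_sets_lebesgue) auto
    then show ?thesis using measurable_controls measurable_mean by measurable
  qed
  have int: "(\<lambda>s. exp s * (2 * a2 s * mean s)) integrable_on {0..T}"
    using integrable_exp_controls_mean[of 0 2] by (simp add: mult.assoc)
  have nonneg: "0 \<le> exp s * (2 * a2 s * mean s)" if "s \<in> {0..T}" for s
    using control_bounds[OF that] mean_pos[OF that] by simp
  then show "0 \<le> integral {0..T} (\<lambda>s. exp s * (2 * a2 s * mean s))"
    by (intro integral_nonneg[OF int]) auto
  assume zero: "integral {0..T} (\<lambda>s. exp s * (2 * a2 s * mean s)) = 0"
  obtain B where B: "\<And>t. t \<in> {0..T} \<Longrightarrow> \<bar>mean t\<bar> \<le> B" using mean_bounded by metis
  have "\<bar>exp s * (2 * a2 s * mean s)\<bar> \<le> exp T * (2 * B)" if "s \<in> {0..T}" for s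
    unfolding abs_mult using that control_bounds[OF that] B[OF that] by (intro mult_mono) auto
  then have "AE s in lebesgue_on {0..T}. exp s * (2 * a2 s * mean s) = 0"
    using AE_eq_0_if_nonneg_integral_eq_0[OF m _ nonneg zero] by blast
  moreover have "AE s in lebesgue_on {0..T}. 0 < mean s"
    using mean_pos by (intro AE_I2) auto
  ultimately show "AE t in lebesgue_on {0..T}. a2 t = 0"
    by eventually_elim auto
qed

text \<open>The two correction terms are nonnegative, by \<open>mean_le_switch_mean\<close> and \<open>a2 \<ge> 0\<close>.\<close>
lemma final_gap_decomposition:
  "gap T * exp T = switch_gap M switch_time (mean 0) (gap 0) T * exp T
     + 2 * (integral {0..T} (\<lambda>s. exp s * switch_mean M switch_time (mean 0) s)
            - integral {0..T} (\<lambda>s. exp s * mean s))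
     + integral {0..T} (\<lambda>s. exp s * (2 * a2 s * mean s))"
proof -
  have int: "(\<lambda>s. exp s * ((a1 s + a2 s) * mean s)) integrable_on {0..T}"
    "(\<lambda>s. exp s * ((a1 s - a2 s) * mean s)) integrable_on {0..T}"
    using integrable_exp_controls_mean[of 1 1] integrable_exp_controls_mean[of 1 "- 1"] by simp_all
  have "integral {0..T} (\<lambda>s. exp s * (2 * a2 s * mean s))
      = integral {0..T} (\<lambda>s. exp s * ((a1 s + a2 s) * mean s) - exp s * ((a1 s - a2 s) * mean s))"
    by (rule integral_cong) (simp add: field_simps)
  also have "\<dots> = integral {0..T} (\<lambda>s. exp s * ((a1 s + a2 s) * mean s))
      - integral {0..T} (\<lambda>s. exp s * ((a1 s - a2 s) * mean s))"
    using int by (rule Henstock_Kurzweil_Integration.integral_diff)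
  finally have "integral {0..T} (\<lambda>s. exp s * (2 * a2 s * mean s))
      = integral {0..T} (\<lambda>s. exp s * ((a1 s + a2 s) * mean s))
      - integral {0..T} (\<lambda>s. exp s * ((a1 s - a2 s) * mean s))" .
  moreover have "gap T * exp T = gap 0 - integral {0..T} (\<lambda>s. exp s * ((a1 s - a2 s) * mean s))"
    by (rule gap_exp_eq) (use T_pos in auto)
  moreover have "mean T * exp T = switch_mean M switch_time (mean 0) T * exp T"
    using final_mean_eq by simp
  moreover have "switch_gap M switch_time (mean 0) (gap 0) T * exp T = gap 0 - 2 * (mean 0
      + integral {0..T} (\<lambda>s. exp s * switch_mean M switch_time (mean 0) s)
      - switch_mean M switch_time (mean 0) T * exp T)"
    using switch_time_bounds M_less_1 by (intro switch_gap_eq) auto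
  ultimately show ?thesis using weighted_effort_eq by argo
qed

lemma final_gap_ge: "switch_gap M switch_time (mean 0) (gap 0) T \<le> gap T"
proof -
  have "\<And>g s d a :: real. g = s + 2 * d + a \<Longrightarrow> 0 \<le> d \<Longrightarrow> 0 \<le> a \<Longrightarrow> s \<le> g"
    by linarith
  from this[OF final_gap_decomposition exp_mean_deficit(1) weighted_a2_integral(1)]
  show ?thesis by simp
qed

lemma final_gap_eq_switch_gap_imp:
  assumes "gap T = switch_gap M switch_time (mean 0) (gap 0) T"
  shows "AE t in lebesgue_on {0..T}. a2 t = 0"
    and "t \<in> {0..T} \<Longrightarrow> mean t = switch_mean M switch_time (mean 0) t"
proof -
  have split: "\<And>g s d a :: real. g = s + 2 * d + a \<Longrightarrow> 0 \<le> d \<Longrightarrow> 0 \<le> a \<Longrightarrow> g = s \<Longrightarrow> d = 0 \<and> a = 0"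
    by linarith
  have "gap T * exp T = switch_gap M switch_time (mean 0) (gap 0) T * exp T"
    by (simp only: assms)
  note zero = split[OF final_gap_decomposition exp_mean_deficit(1) weighted_a2_integral(1) this]
  show "AE t in lebesgue_on {0..T}. a2 t = 0"
    using zero by (intro weighted_a2_integral(2)) (rule conjunct2)
  show "mean t = switch_mean M switch_time (mean 0) t" if "t \<in> {0..T}"
    using zero that by (intro exp_mean_deficit(2)) auto
qed

lemma total_control_AE_eq:
  assumes uv: "0 \<le> u" "u \<le> v" "v \<le> T"
  shows "integral {u..v} (\<lambda>s. a1 s + a2 s) = 0 \<Longrightarrow> AE t in lebesgue_on {u..v}. a1 t + a2 t = 0"
    and "integral {u..v} (\<lambda>s. a1 s + a2 s) = M * (v - u) \<Longrightarrow> AE t in lebesgue_on {u..v}. a1 t + a2 t = M"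
proof -
  have bounds: "0 \<le> a1 x + a2 x" "a1 x + a2 x \<le> M" if "x \<in> {u..v}" for x
    using control_bounds[of x] that uv by auto
  have sub: "{u..v} \<subseteq> {0..T}" using uv by auto
  have "(\<lambda>s. a1 s + a2 s) \<in> borel_measurable (lebesgue_on {0..T})"
    "(\<lambda>s. M - (a1 s + a2 s)) \<in> borel_measurable (lebesgue_on {0..T})"
    using measurable_controls by measurable
  note m = this[THEN measurable_restrict_mono, OF sub]
  show "AE t in lebesgue_on {u..v}. a1 t + a2 t = 0" if "integral {u..v} (\<lambda>s. a1 s + a2 s) = 0"
  proof (rule AE_eq_0_if_nonneg_integral_eq_0[OF m(1) _ _ that])
    show "\<bar>a1 x + a2 x\<bar> \<le> M" "0 \<le> a1 x + a2 x" if "x \<in> {u..v}" for x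
      using bounds[OF that] by auto
  qed
  assume full: "integral {u..v} (\<lambda>s. a1 s + a2 s) = M * (v - u)"
  have "(\<lambda>s. a1 s + a2 s) integrable_on {u..v}"
    using integrable_total_control uv by (auto intro: integrable_on_subinterval)
  then have "integral {u..v} (\<lambda>s. M - (a1 s + a2 s)) = M * (v - u) - integral {u..v} (\<lambda>s. a1 s + a2 s)"
    using Henstock_Kurzweil_Integration.integral_diff[OF integrable_const_ivl, of _ u v M] uv by simp
  then have "AE t in lebesgue_on {u..v}. M - (a1 t + a2 t) = 0"
  proof (intro AE_eq_0_if_nonneg_integral_eq_0[OF m(2)])
    show "\<bar>M - (a1 x + a2 x)\<bar> \<le> M" "0 \<le> M - (a1 x + a2 x)" if "x \<in> {u..v}" for x
      using bounds[OF that] by auto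
  qed (use full in simp)
  then show "AE t in lebesgue_on {u..v}. a1 t + a2 t = M" by eventually_elim auto
qed

lemma bang_bang_if_final_gap_eq_switch_gap:
  assumes gap: "gap T = switch_gap M switch_time (mean 0) (gap 0) T"
  shows "AE t in lebesgue. t \<in> {0..<switch_time} \<longrightarrow> a1 t = 0 \<and> a2 t = 0"
    and "AE t in lebesgue. t \<in> {switch_time..T} \<longrightarrow> a1 t = M \<and> a2 t = 0"
proof -
  have ts: "switch_time \<in> {0..T}" using switch_time_bounds by auto
  have "mean switch_time = mean 0"
    using final_gap_eq_switch_gap_imp(2)[OF gap ts] by (simp add: switch_mean_def)
  then have "exp (- effort switch_time / 2) = 1"
    using mean_eq[OF ts] mean_0_pos by simp
  then have idle: "effort switch_time = 0" by simp
  have "integral {switch_time..T} (\<lambda>s. a1 s + a2 s) = M * (T - switch_time)"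
    using effort_increment(1)[of switch_time T] ts idle M_pos by simp
  then have "AE t in lebesgue_on {switch_time..T}. a1 t + a2 t = M"
    using ts by (intro total_control_AE_eq(2)) auto
  moreover have "AE t in lebesgue_on {0..switch_time}. a1 t + a2 t = 0"
    using ts idle by (intro total_control_AE_eq(1)) auto
  moreover have "AE t in lebesgue_on {0..T}. a2 t = 0"
    using final_gap_eq_switch_gap_imp(1)[OF gap] .
  ultimately have on_full: "AE t in lebesgue. t \<in> {switch_time..T} \<longrightarrow> a1 t + a2 t = M"
    and idle_ae: "AE t in lebesgue. t \<in> {0..switch_time} \<longrightarrow> a1 t + a2 t = 0"
    and a2_ae: "AE t in lebesgue. t \<in> {0..T} \<longrightarrow> a2 t = 0"
    by (auto dest: AE_lebesgue_if_AE_lebesgue_on)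
  show "AE t in lebesgue. t \<in> {0..<switch_time} \<longrightarrow> a1 t = 0 \<and> a2 t = 0"
    using idle_ae
  proof eventually_elim
    case (elim t)
    then show ?case using control_bounds[of t] ts by auto
  qed
  show "AE t in lebesgue. t \<in> {switch_time..T} \<longrightarrow> a1 t = M \<and> a2 t = 0"
    using on_full a2_ae by eventually_elim (use ts in auto)
qed

lemma full_effort_if_switch_time_eq_0:
  assumes "switch_time = 0"
  shows "AE t in lebesgue_on {0..T}. a1 t + a2 t = M"
    and "t \<in> {0..T} \<Longrightarrow> mean t = mean 0 * exp (- M * t / 2)"
proof -
  have full: "effort T = M * T" using assms M_pos by (simp add: field_simps)
  then show "AE t in lebesgue_on {0..T}. a1 t + a2 t = M"
    using T_pos by (intro total_control_AE_eq(2)) auto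
  assume t: "t \<in> {0..T}"
  then have "effort t = M * t"
    using effort_bounds[OF t] effort_increment(3)[of t T] full by (auto simp: algebra_simps)
  then show "mean t = mean 0 * exp (- M * t / 2)" using mean_eq[OF t] by simp
qed

end

section \<open>Optimal trajectories\<close>

locale optimal_trajectory = controlled_trajectory +
  assumes gap_0_pos: "x2 0 < x1 0"
    and optimal: "optimal T M a1 a2 x1 x2"
begin

lemma cost_le_switch_cost:
  assumes "0 \<le> lam" "lam \<le> 1" "0 \<le> ts" "ts \<le> T"
  shows "(mean T)^2 + (gap T)^2 / 4
    \<le> (switch_mean M ts (mean 0) T)^2 + (switch_gap M ts (lam * mean 0) (gap 0) T)^2 / 4"
proof -
  define y1 where "y1 t = switch_mean M ts (mean 0) t + switch_gap M ts (lam * mean 0) (gap 0) t / 2" for t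
  define y2 where "y2 t = switch_mean M ts (mean 0) t - switch_gap M ts (lam * mean 0) (gap 0) t / 2" for t
  have "admissible T M (switch_control ts (M * (1 + lam) / 2)) (switch_control ts (M * (1 - lam) / 2))"
    using assms M_pos M_less_1 by (intro switch_admissible) auto
  moreover have "is_traj T (switch_control ts (M * (1 + lam) / 2)) (switch_control ts (M * (1 - lam) / 2)) y1 y2"
    unfolding y1_def[abs_def] y2_def[abs_def] by (rule switch_trajectory(1)[OF M_pos M_less_1 assms(3)])
  moreover have "y1 0 = x1 0" "y2 0 = x2 0"
    using switch_trajectory(2,3)[OF M_pos M_less_1 assms(3), of "mean 0" lam "gap 0"]
    unfolding y1_def y2_def by (simp_all add: field_simps)
  ultimately have "cost T x1 x2 \<le> cost T y1 y2"
    using optimal unfolding optimal_def by blast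
  then show ?thesis unfolding cost_eq_mean_gap y1_def y2_def by simp
qed

lemma cost_le_bang_switch_cost:
  assumes "0 \<le> t" "t \<le> T"
  shows "(switch_mean M switch_time (mean 0) T)^2 + (gap T)^2 / 4
    \<le> (switch_mean M t (mean 0) T)^2 + (switch_gap M t (mean 0) (gap 0) T)^2 / 4"
  using cost_le_switch_cost[of 1 t] assms final_mean_eq by simp

lemma switch_mean_final_sq_mono:
  assumes "t \<le> t'"
  shows "(switch_mean M t (mean 0) T)^2 \<le> (switch_mean M t' (mean 0) T)^2"
  using mean_0_pos M_pos assms by (intro power_mono switch_mean_final_mono) (auto simp: switch_mean_def)

lemma diagonal_if_switch_gap_at_0_nonpos:
  assumes "switch_gap M 0 (mean 0) (gap 0) T \<le> 0"
  shows "gap T = 0" and "switch_time = 0"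
proof -
  have "switch_gap M 0 (1 * mean 0) (gap 0) T \<le> 0" "0 \<le> switch_gap M 0 (0 * mean 0) (gap 0) T"
    using assms T_pos gap_0_pos by (simp_all add: switch_gap_final_at_T[symmetric] switch_gap_def)
  then have "\<exists>lam. 0 \<le> lam \<and> lam \<le> 1 \<and> switch_gap M 0 (lam * mean 0) (gap 0) T = 0"
    by (intro IVT2'[of "\<lambda>lam. switch_gap M 0 (lam * mean 0) (gap 0) T"] continuous_switch_gap_scale) auto
  then obtain lam where lam: "0 \<le> lam" "lam \<le> 1" "switch_gap M 0 (lam * mean 0) (gap 0) T = 0"
    by blast
  have "(switch_mean M switch_time (mean 0) T)^2 + (gap T)^2 / 4 \<le> (switch_mean M 0 (mean 0) T)^2"
    using cost_le_switch_cost[OF lam(1,2) order_refl] T_pos lam(3) final_mean_eq by simp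
  moreover have "(switch_mean M 0 (mean 0) T)^2 \<le> (switch_mean M switch_time (mean 0) T)^2"
    using switch_time_bounds by (intro switch_mean_final_sq_mono) auto
  ultimately have "(gap T)^2 = 0"
    and "(switch_mean M switch_time (mean 0) T)^2 = (switch_mean M 0 (mean 0) T)^2"
    using zero_le_power2[of "gap T"] by linarith+
  then have "gap T = 0" "switch_mean M switch_time (mean 0) T = switch_mean M 0 (mean 0) T"
    using mean_0_pos by (auto simp: power2_eq_iff_nonneg switch_mean_def)
  then show "gap T = 0" "switch_time = 0"
    using switch_mean_final_eq_iff[OF mean_0_pos M_pos] switch_time_bounds T_pos by auto
qed

lemma switch_gap_at_switch_time_pos:
  assumes L0: "0 < switch_gap M 0 (mean 0) (gap 0) T"
  shows "0 < switch_gap M switch_time (mean 0) (gap 0) T"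
proof (rule ccontr)
  let ?B = "\<lambda>ts. switch_mean M ts (mean 0) T" and ?L = "\<lambda>ts. switch_gap M ts (mean 0) (gap 0) T"
  note ts = switch_time_bounds
  assume "\<not> 0 < ?L switch_time"
  then have "\<exists>t. 0 \<le> t \<and> t \<le> switch_time \<and> ?L t = 0"
    using L0 ts continuous_on_subset[OF continuous_switch_gap_final[of T M "mean 0" "gap 0"]]
    by (intro IVT2') auto
  then obtain t1 where t1: "0 \<le> t1" "t1 \<le> switch_time" "?L t1 = 0" by blast
  have "0 < t1" using L0 t1 by (cases "t1 = 0") auto
  moreover have "t1 \<le> T" using t1 ts by linarith
  ultimately obtain t where t: "t \<in> {0..<t1}" and less: "(?B t)^2 + (?L t)^2 / 4 < (?B t1)^2"
    using switch_cost_decreases_before_gap_zero[OF mean_0_pos M_pos M_less_1 _ _ t1(3)] by blast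
  note less
  also have "(?B t1)^2 \<le> (?B switch_time)^2 + (gap T)^2 / 4"
    using switch_mean_final_sq_mono[OF t1(2)] zero_le_power2[of "gap T"] by linarith
  also have "\<dots> \<le> (?B t)^2 + (?L t)^2 / 4"
    using cost_le_bang_switch_cost t t1 ts by auto
  finally show False by simp
qed

text \<open>Since the final gap is at least its value for the bang-bang control with the same total
  effort, the cost comparison with that control forces equality.\<close>
lemma switches_if_switch_gap_at_0_pos:
  assumes L0: "0 < switch_gap M 0 (mean 0) (gap 0) T"
  shows "gap T = switch_gap M switch_time (mean 0) (gap 0) T" and "gap T \<noteq> 0" and "switch_time < T"
proof -
  let ?B = "\<lambda>ts. switch_mean M ts (mean 0) T" and ?L = "\<lambda>ts. switch_gap M ts (mean 0) (gap 0) T"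
  note ts = switch_time_bounds and L_pos = switch_gap_at_switch_time_pos[OF L0]
  have "(gap T)^2 \<le> (?L switch_time)^2" using cost_le_bang_switch_cost[OF ts] by simp
  then have "gap T \<le> ?L switch_time" using L_pos by (auto intro: power2_le_imp_le)
  then show gap_eq: "gap T = ?L switch_time" using final_gap_ge by simp
  then show "gap T \<noteq> 0" using L_pos by simp
  show "switch_time < T"
  proof (rule ccontr)
    assume "\<not> switch_time < T"
    then have T_eq: "switch_time = T" using ts by simp
    have "1 < exp (T - M * T / 2)" using T_pos M_less_1 by (simp add: algebra_simps)
    then have "?L 0 < ?L T"
      using T_pos mean_0_pos M_pos M_less_1
      by (simp add: switch_final_eqs switch_gap_final_at_T mult_strict_left_mono)
    then have "(?L 0)^2 < (?L T)^2" using L0 by (intro power_strict_mono) auto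
    then have "(?B 0)^2 + (?L 0)^2 / 4 < (?B T)^2 + (gap T)^2 / 4"
      using switch_mean_final_sq_mono[of 0 T] gap_eq T_eq T_pos by simp
    then show False using cost_le_bang_switch_cost[of 0] T_eq T_pos by simp
  qed
qed

end

theorem theorem2:
  fixes T M :: real and a1 a2 x1 x2 :: "real \<Rightarrow> real"
  assumes "T > 0" and "0 < M" and "M < 1"
    and "(x1 0 + x2 0) / 2 > 0" and "x1 0 > x2 0"
    and "optimal T M a1 a2 x1 x2"
    and "\<forall>t\<in>{0..T}. x1 t \<ge> x2 t"
  defines "t0 \<equiv> 2 / (2 - M) * ln ((2 - M) / (2 * M) * ((x1 0 - x2 0) / ((x1 0 + x2 0) / 2)) + 1)"
  shows "(T \<ge> t0 \<longleftrightarrow> x1 T = x2 T)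
         \<and> (T \<ge> t0 \<longrightarrow>
              (AE t in lebesgue_on {0..T}. a1 t + a2 t = M) \<and>
              (\<forall>t\<in>{0..T}. (x1 t + x2 t) / 2 = (x1 0 + x2 0) / 2 * exp (- M * t / 2)))
         \<and> (T < t0 \<longrightarrow> (\<exists>ts\<in>{0..<T}.
              (AE t in lebesgue. t \<in> {0..<ts} \<longrightarrow> a1 t = 0 \<and> a2 t = 0) \<and>
              (AE t in lebesgue. t \<in> {ts..T} \<longrightarrow> a1 t = M \<and> a2 t = 0)))"
proof -
  interpret optimal_trajectory T M a1 a2 x1 x2
    using assms(1-6) by unfold_locales (auto simp: optimal_def)
  have "0 < gap 0" using gap_0_pos by simp
  then have t0: "switch_gap M 0 (mean 0) (gap 0) T \<le> 0 \<longleftrightarrow> t0 \<le> T"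
    unfolding t0_def using T_pos by (intro switch_gap_final_at_0_nonpos_iff[OF M_pos M_less_1 mean_0_pos]) auto
  show ?thesis
  proof (cases "switch_gap M 0 (mean 0) (gap 0) T \<le> 0")
    case True
    then have "gap T = 0" "switch_time = 0" by (rule diagonal_if_switch_gap_at_0_nonpos)+
    then show ?thesis using full_effort_if_switch_time_eq_0 t0 True by auto
  next
    case False
    then have "gap T = switch_gap M switch_time (mean 0) (gap 0) T" "gap T \<noteq> 0" "switch_time < T"
      using switches_if_switch_gap_at_0_pos by auto
    then show ?thesis
      using bang_bang_if_final_gap_eq_switch_gap switch_time_bounds t0 False by auto
  qed
qed

end
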